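(* Let $n \ge 2$ and let $\tilde{\mathcal{C}} = [\tilde{\mathbf{x}}_1, \ldots, \tilde{\mathbf{x}}_n]^\top \in \mathbb{R}^{n \times 3}$ be a set of coordinates with adjacency (pairwise distance) matrix $\tilde{d}$, i.e. $\tilde{d}_{ij} = \|\tilde{\mathbf{x}}_i - \tilde{\mathbf{x}}_j\|$. Fix indices $u \neq v$ in $\{1,\ldots,n\}$ with $\tilde{\mathbf{x}}_u \neq \tilde{\mathbf{x}}_v$, let $\delta > 0$, and let $\hat{d} = \tilde{d} + \delta \bar{e}_{uv}$, where $\bar{e}_{uv}$ is the $n\times n$ matrix whose $(u,v)$ and $(v,u)$ entries equal $1$ and all other entries equal $0$. Consider the optimization problem $$f(\hat{d}) \triangleq \min_{\hat{\mathcal{C}} = [\hat{\mathbf{x}}_1, \ldots, \hat{\mathbf{x}}_n]} \sum_{i<j} \left( \|\hat{\mathbf{x}}_i - \hat{\mathbf{x}}_j\| - \hat{d}_{ij} \right)^2 .$$ Define the approximate solution $\hat{\mathcal{C}} = \tilde{\mathcal{C}} + \frac{\delta}{2(n-1)} \frac{\partial \tilde{d}_{uv}}{\partial \tilde{\mathcal{C}}}$, i.e. $\hat{\mathbf{x}}_u = \tilde{\mathbf{x}}_u + \frac{\delta}{2(n-1)}\boldsymbol{\lambda}_{uv}$, $\hat{\mathbf{x}}_v = \tilde{\mathbf{x}}_v - \frac{\delta}{2(n-1)}\boldsymbol{\lambda}_{uv}$, and $\hat{\mathbf{x}}_w = \tilde{\mathbf{x}}_w$ for $w \neq u,v$, where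 $\boldsymbol{\lambda}_{uv} = \frac{\tilde{\mathbf{x}}_u - \tilde{\mathbf{x}}_v}{\|\tilde{\mathbf{x}}_u - \tilde{\mathbf{x}}_v\|}$. Then the objective value at this approximate solution satisfies $$\sum_{i<j} \left( \|\hat{\mathbf{x}}_i - \hat{\mathbf{x}}_j\| - \hat{d}_{ij} \right)^2 \le \frac{2n^2 - 7n + 6}{2(n-1)^2}\,\delta^2,$$ and in particular $f(\hat{d}) \le \frac{2n^2 - 7n + 6}{2(n-1)^2}\,\delta^2$.
   Context: Norms $\|\cdot\|$ on vectors in $\mathbb{R}^3$ are Euclidean. $\frac{\partial \tilde{d}_{uv}}{\partial \tilde{\mathcal{C}}}$ denotes the $n\times 3$ matrix of partial derivatives of $\tilde{d}_{uv} = \|\tilde{\mathbf{x}}_u - \tilde{\mathbf{x}}_v\|$ with respect to the rows of $\tilde{\mathcal{C}}$: its row $u$ is $\boldsymbol{\lambda}_{uv}$, its row $v$ is $-\boldsymbol{\lambda}_{uv}$, and all other rows are zero. *)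

theory Defs
  imports "HOL-Analysis.Analysis"
begin

text \<open>Configurations of n points in R^3 are maps from indices {1..n} to real^3
  (values outside {1..n} are irrelevant). Distance-like matrices are maps nat => nat => real.\<close>

definition adj_matrix :: "(nat \<Rightarrow> real^3) \<Rightarrow> nat \<Rightarrow> nat \<Rightarrow> real" where
  "adj_matrix C i j = norm (C i - C j)"

definition ebar :: "nat \<Rightarrow> nat \<Rightarrow> nat \<Rightarrow> nat \<Rightarrow> real" where
  "ebar u v i j = (if (i = u \<and> j = v) \<or> (i = v \<and> j = u) then 1 else 0)"

definition lambda_uv :: "(nat \<Rightarrow> real^3) \<Rightarrow> nat \<Rightarrow> nat \<Rightarrow> real^3" where
  "lambda_uv C u v = (C u - C v) /\<^sub>R norm (C u - C v)"

definition stress :: "nat \<Rightarrow> (nat \<Rightarrow> nat \<Rightarrow> real) \<Rightarrow> (nat \<Rightarrow> real^3) \<Rightarrow> real" where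
  "stress n d C = (\<Sum>(i,j)\<in>{(i,j). 1 \<le> i \<and> i < j \<and> j \<le> n}. (norm (C i - C j) - d i j)^2)"

definition f_opt :: "nat \<Rightarrow> (nat \<Rightarrow> nat \<Rightarrow> real) \<Rightarrow> real" where
  "f_opt n d = (INF C. stress n d C)"

end

theory Submission
  imports Defs
begin

text \<open>Pushing \<open>x\<^sub>u\<close> and \<open>x\<^sub>v\<close> apart by \<open>c = \<delta>/(2(n-1))\<close> each along their connecting line
  lengthens \<open>d\<^sub>u\<^sub>v\<close> by exactly \<open>2c\<close>, leaving the residual \<open>(2c - \<delta>)\<^sup>2\<close> on the pair \<open>{u,v}\<close>.
  By the triangle inequality every other distance involving \<open>u\<close> or \<open>v\<close> changes by at most
  \<open>c\<close>, and the \<open>2(n-2)\<close> such pairs contribute at most \<open>2(n-2)c\<^sup>2\<close>; all remaining residuals vanish.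
  For this \<open>c\<close> the total \<open>(2c - \<delta>)\<^sup>2 + 2(n-2)c\<^sup>2\<close> is exactly the claimed bound.\<close>

lemma sum_upper_pairs_supported_at_two_points:
  fixes g :: "nat \<Rightarrow> nat \<Rightarrow> 'a::comm_monoid_add"
  assumes "u \<in> {1..n}" "v \<in> {1..n}" "u \<noteq> v"
    and sym: "\<And>i j. g i j = g j i"
    and vanish: "\<And>i j. i \<notin> {u, v} \<Longrightarrow> j \<notin> {u, v} \<Longrightarrow> g i j = 0"
  shows "(\<Sum>(i,j)\<in>{(i,j). 1 \<le> i \<and> i < j \<and> j \<le> n}. g i j)
       = g u v + (\<Sum>w\<in>{1..n} - {u, v}. g u w + g v w)"
proof -
  define S where "S = {(i,j). 1 \<le> i \<and> i < j \<and> j \<le> n}"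
  define W where "W = {1..n} - {u, v}"
  define upair where "upair a b = (min a b, max a b)" for a b :: nat
  define A where "A = upair u ` ({1..n} - {u})"
  define B where "B = upair v ` W"
  have finite_S: "finite S"
    by (rule finite_subset[of _ "{1..n} \<times> {1..n}"]) (auto simp: S_def)
  have upair_in_S: "upair a b \<in> S" if "a \<in> {1..n}" "b \<in> {1..n}" "a \<noteq> b" for a b
    using that by (auto simp: S_def upair_def min_def max_def)
  have AB_sub: "A \<union> B \<subseteq> S"
    unfolding A_def B_def W_def using assms(1-3) by (intro Un_least image_subsetI upair_in_S) auto
  have upair_commute: "upair a b = upair b a" for a b
    by (simp add: upair_def min.commute max.commute)
  have upair_touching: "upair a b \<in> A \<union> B" if ab: "a \<in> {u, v}" "b \<in> {1..n}" "a \<noteq> b" for a b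
  proof -
    consider "a = u" | "a = v" "b = u" | "a = v" "b \<noteq> u"
      using ab(1) by blast
    then show ?thesis
    proof cases
      case 1
      then show ?thesis using ab(2,3) by (simp add: A_def)
    next
      case 2
      then show ?thesis using assms(2,3) by (simp add: A_def upair_commute[of v u])
    next
      case 3
      then show ?thesis using ab(2,3) by (simp add: B_def W_def)
    qed
  qed
  have off_AB: "g i j = 0" if "(i, j) \<in> S - (A \<union> B)" for i j
  proof (rule vanish)
    have "upair i j = (i, j)" "upair j i = (i, j)" using that by (auto simp: upair_def S_def)
    then show "i \<notin> {u, v}" "j \<notin> {u, v}"
      using that upair_touching[of i j] upair_touching[of j i] by (auto simp: S_def)
  qed
  have g_upair: "(\<lambda>(i,j). g i j) (upair a b) = g a b" for a b
    using sym[of a b] by (simp add: upair_def min_def max_def)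
  have inj_upair: "inj_on (upair a) X" for a X
    by (rule inj_onI) (auto simp: upair_def min_def max_def split: if_splits)
  have disjoint: "A \<inter> B = {}"
    using assms(3) by (auto simp: A_def B_def W_def upair_def min_def max_def split: if_splits)
  have "(\<Sum>(i,j)\<in>S. g i j) = (\<Sum>(i,j)\<in>A \<union> B. g i j)"
    by (rule sum.mono_neutral_right[OF finite_S AB_sub]) (use off_AB in auto)
  also have "\<dots> = (\<Sum>(i,j)\<in>A. g i j) + (\<Sum>(i,j)\<in>B. g i j)"
    by (rule sum.union_disjoint) (use disjoint in \<open>auto simp: A_def B_def W_def\<close>)
  also have "\<dots> = (\<Sum>w\<in>{1..n} - {u}. g u w) + (\<Sum>w\<in>W. g v w)"
    by (simp add: A_def B_def sum.reindex[OF inj_upair] g_upair)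
  also have "{1..n} - {u} = insert v W"
    using assms(2,3) by (auto simp: W_def)
  also have "(\<Sum>w\<in>insert v W. g u w) + (\<Sum>w\<in>W. g v w) = g u v + (\<Sum>w\<in>W. g u w + g v w)"
    by (simp add: W_def sum.distrib add.assoc)
  finally show ?thesis by (simp add: S_def W_def)
qed

lemma norm_push_apart_along_difference:
  fixes a b :: "'a::real_normed_vector"
  assumes "a \<noteq> b" "c \<ge> 0"
  defines "l \<equiv> (a - b) /\<^sub>R norm (a - b)"
  shows "norm ((a + c *\<^sub>R l) - (b - c *\<^sub>R l)) = norm (a - b) + 2 * c"
proof -
  have D: "norm (a - b) > 0" using assms(1) by simp
  have "(a + c *\<^sub>R l) - (b - c *\<^sub>R l) = (a - b) + (2 * c) *\<^sub>R l"
    by (simp add: algebra_simps flip: scaleR_2)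
  also have "\<dots> = (1 + 2 * c / norm (a - b)) *\<^sub>R (a - b)"
    by (simp add: l_def scaleR_left_distrib divide_inverse)
  finally have "norm ((a + c *\<^sub>R l) - (b - c *\<^sub>R l)) = (1 + 2 * c / norm (a - b)) * norm (a - b)"
    using D assms(2) by simp
  also have "\<dots> = norm (a - b) + 2 * c"
    using D by (simp add: field_simps)
  finally show ?thesis .
qed

lemma power2_norm_diff_translate_le:
  fixes a b t :: "'a::real_normed_vector"
  shows "(norm ((a + t) - b) - norm (a - b))\<^sup>2 \<le> (norm t)\<^sup>2"
proof -
  have "\<bar>norm ((a + t) - b) - norm (a - b)\<bar> \<le> norm ((a + t) - b - (a - b))"
    by (rule norm_triangle_ineq3)
  then show ?thesis
    by (simp add: abs_le_square_iff[symmetric] del: abs_le_square_iff)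
qed

lemma two_point_perturbation_bound_eq:
  fixes r \<delta> :: real
  assumes "r \<noteq> 1"
  defines "c \<equiv> \<delta> / (2 * (r - 1))"
  shows "(2 * c - \<delta>)\<^sup>2 + 2 * (r - 2) * c\<^sup>2 = (2 * r ^ 2 - 7 * r + 6) / (2 * (r - 1) ^ 2) * \<delta> ^ 2"
proof -
  define m where "m = r - 1"
  have "m \<noteq> 0" "r = m + 1" using assms(1) by (auto simp: m_def)
  then show ?thesis unfolding c_def m_def[symmetric] by (simp add: field_simps power2_eq_square)
qed

lemma f_opt_le_stress: "f_opt n d \<le> stress n d C"
  unfolding f_opt_def
  by (rule cINF_lower) (auto simp: bdd_below_def stress_def intro!: exI[of _ 0] sum_nonneg)

lemma stress_push_apart_le:
  fixes x :: "nat \<Rightarrow> real^3" and \<delta> c :: real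
  assumes "u \<in> {1..n}" "v \<in> {1..n}" "u \<noteq> v" "x u \<noteq> x v" "c \<ge> 0"
  defines "l \<equiv> lambda_uv x u v"
  defines "dhat \<equiv> (\<lambda>i j. adj_matrix x i j + \<delta> * ebar u v i j)"
    and "xhat \<equiv> (\<lambda>w. if w = u then x u + c *\<^sub>R l else if w = v then x v - c *\<^sub>R l else x w)"
  shows "stress n dhat xhat \<le> (2 * c - \<delta>)\<^sup>2 + 2 * (real n - 2) * c\<^sup>2"
proof -
  define W where "W = {1..n} - {u, v}"
  define r where "r i j = (norm (xhat i - xhat j) - dhat i j)\<^sup>2" for i j
  have norm_l: "norm l = 1" using assms(4) by (simp add: l_def lambda_uv_def)
  have xhat_u: "xhat u = x u + c *\<^sub>R l" and xhat_v: "xhat v = x v - c *\<^sub>R l"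
    using assms(3) by (simp_all add: xhat_def)
  have r_uv: "r u v = (2 * c - \<delta>)\<^sup>2"
    using norm_push_apart_along_difference[OF assms(4,5)] assms(3)
    by (simp add: r_def xhat_u xhat_v dhat_def adj_matrix_def ebar_def l_def lambda_uv_def
        power2_commute algebra_simps)
  have r_touching: "r u w + r v w \<le> c\<^sup>2 + c\<^sup>2" if "w \<in> W" for w
  proof (rule add_mono)
    have "xhat w = x w" "dhat u w = norm (x u - x w)" "dhat v w = norm (x v - x w)"
      using that by (auto simp: W_def xhat_def dhat_def adj_matrix_def ebar_def)
    then show "r u w \<le> c\<^sup>2" "r v w \<le> c\<^sup>2"
      using power2_norm_diff_translate_le[of "x u" "c *\<^sub>R l" "x w"]
        power2_norm_diff_translate_le[of "x v" "- c *\<^sub>R l" "x w"] assms(5) norm_l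
      by (simp_all add: r_def xhat_u xhat_v)
  qed
  have "stress n dhat xhat = r u v + (\<Sum>w\<in>W. r u w + r v w)"
    unfolding stress_def r_def W_def
    by (rule sum_upper_pairs_supported_at_two_points[OF assms(1-3)])
      (auto simp: xhat_def dhat_def adj_matrix_def ebar_def norm_minus_commute)
  also have "\<dots> \<le> (2 * c - \<delta>)\<^sup>2 + (\<Sum>w\<in>W. c\<^sup>2 + c\<^sup>2)"
    unfolding r_uv by (intro add_left_mono sum_mono r_touching)
  also have "\<dots> = (2 * c - \<delta>)\<^sup>2 + 2 * (real n - 2) * c\<^sup>2"
    using assms(1-3) by (simp add: W_def card_Diff_subset of_nat_diff)
  finally show ?thesis .
qed

theorem theorem4p1:
  fixes n :: nat and x :: "nat \<Rightarrow> real^3" and u v :: nat and \<delta> :: real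
  assumes "n \<ge> 2"
    and "u \<in> {1..n}" and "v \<in> {1..n}" and "u \<noteq> v"
    and "x u \<noteq> x v"
    and "\<delta> > 0"
  defines "dhat \<equiv> (\<lambda>i j. adj_matrix x i j + \<delta> * ebar u v i j)"
    and "xhat \<equiv> (\<lambda>w. if w = u then x u + (\<delta> / (2 * (real n - 1))) *\<^sub>R lambda_uv x u v
                      else if w = v then x v - (\<delta> / (2 * (real n - 1))) *\<^sub>R lambda_uv x u v
                      else x w)"
  shows "stress n dhat xhat \<le> (2 * real n ^ 2 - 7 * real n + 6) / (2 * (real n - 1) ^ 2) * \<delta> ^ 2
       \<and> f_opt n dhat \<le> (2 * real n ^ 2 - 7 * real n + 6) / (2 * (real n - 1) ^ 2) * \<delta> ^ 2"
proof -
  define c where "c = \<delta> / (2 * (real n - 1))"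
  have "c \<ge> 0" using assms(1,6) by (simp add: c_def)
  with assms(2-5) have "stress n dhat xhat \<le> (2 * c - \<delta>)\<^sup>2 + 2 * (real n - 2) * c\<^sup>2"
    unfolding dhat_def xhat_def c_def[symmetric] by (rule stress_push_apart_le)
  also have "\<dots> = (2 * real n ^ 2 - 7 * real n + 6) / (2 * (real n - 1) ^ 2) * \<delta> ^ 2"
    using assms(1) unfolding c_def by (intro two_point_perturbation_bound_eq) simp
  finally show ?thesis
    using f_opt_le_stress order_trans by blast
qed

end
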